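(* Let $\beta\in\mathbb{C}$ with $|\beta|=1$, $m\in\mathrm{Hol}(\mathbb{D})$, $m\not\equiv0$, $T:\mathrm{Hol}(\mathbb{D})\to\mathrm{Hol}(\mathbb{D})$ given by $(Tf)(z)=m(z)f(\beta z)$, and let $T_0$ be the restriction of $T$ to $\mathrm{Hol}_0(\mathbb{D})=\{f\in\mathrm{Hol}(\mathbb{D}):f(0)=0\}$ (which is $T$-invariant). Then $\sigma(T_0)=\beta\sigma(T)$ and $\rho(T_0)=\beta\rho(T)$.
   Context: $\mathbb{D}$ is the open unit disc, $\mathrm{Hol}(\mathbb{D})$ the space of holomorphic functions on $\mathbb{D}$. For a linear operator $S$ on a space $Y$, $\rho(S)$ is the set of $\lambda\in\mathbb{C}$ with $\lambda\mathrm{Id}-S$ bijective on $Y$ and $\sigma(S)=\mathbb{C}\setminus\rho(S)$. *)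

theory Defs
  imports "HOL-Analysis.Analysis"
begin

text \<open>Hol(D): holomorphic functions on the open unit disc, represented canonically
  by functions that vanish outside the disc (so that function equality is equality on D).\<close>
definition Hol :: "(complex \<Rightarrow> complex) set" where
  "Hol = {f. f holomorphic_on ball 0 1 \<and> (\<forall>z. z \<notin> ball 0 1 \<longrightarrow> f z = 0)}"

definition Hol0 :: "(complex \<Rightarrow> complex) set" where
  "Hol0 = {f \<in> Hol. f 0 = 0}"

definition wcomp_op :: "(complex \<Rightarrow> complex) \<Rightarrow> complex \<Rightarrow> (complex \<Rightarrow> complex) \<Rightarrow> (complex \<Rightarrow> complex)" where
  "wcomp_op m \<beta> f = (\<lambda>z. if z \<in> ball 0 1 then m z * f (\<beta> * z) else 0)"

definition resolvent_set :: "(('a \<Rightarrow> complex) \<Rightarrow> ('a \<Rightarrow> complex)) \<Rightarrow> ('a \<Rightarrow> complex) set \<Rightarrow> complex set" where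
  "resolvent_set S Y = {c. bij_betw (\<lambda>f. (\<lambda>z. c * f z - S f z)) Y Y}"

definition spectrum_op :: "(('a \<Rightarrow> complex) \<Rightarrow> ('a \<Rightarrow> complex)) \<Rightarrow> ('a \<Rightarrow> complex) set \<Rightarrow> complex set" where
  "spectrum_op S Y = - resolvent_set S Y"

end

theory Submission
  imports Defs "HOL-Complex_Analysis.Complex_Analysis"
begin

text \<open>Multiplication by the coordinate z is a linear bijection J from Hol onto Hol0 (its inverse
  divides by z, the singularity at 0 being removable), and it intertwines the two operators:
  for g in Hol, (\<beta> c - T)(J g) = J (\<beta> (c - T) g), because T(z g)(z) = \<beta> z m(z) g(\<beta> z).
  Hence \<beta> c - T is bijective on Hol0 exactly when c - T is bijective on Hol.\<close>

lemma Hol_cmult: "f \<in> Hol \<Longrightarrow> (\<lambda>z. c * f z) \<in> Hol"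
  by (auto simp: Hol_def intro!: holomorphic_intros)

lemma Hol_cmult_diff: "f \<in> Hol \<Longrightarrow> g \<in> Hol \<Longrightarrow> (\<lambda>z. c * f z - g z) \<in> Hol"
  by (auto simp: Hol_def intro!: holomorphic_intros)

lemma wcomp_op_Hol:
  assumes "norm \<beta> = 1" and m: "m holomorphic_on ball 0 1" and "f \<in> Hol"
  shows "wcomp_op m \<beta> f \<in> Hol"
proof -
  have f: "f holomorphic_on ball 0 1" using \<open>f \<in> Hol\<close> by (simp add: Hol_def)
  have "(\<lambda>z. \<beta> * z) ` ball 0 1 \<subseteq> ball 0 1"
    using \<open>norm \<beta> = 1\<close> by (auto simp: norm_mult)
  then have "(f \<circ> (\<lambda>z. \<beta> * z)) holomorphic_on ball 0 1"
    by (intro holomorphic_on_compose_gen[OF _ f] holomorphic_intros)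
  then have "(\<lambda>z. m z * f (\<beta> * z)) holomorphic_on ball 0 1"
    using m by (auto simp: o_def intro!: holomorphic_intros)
  then have "wcomp_op m \<beta> f holomorphic_on ball 0 1"
    by (rule holomorphic_transform) (simp add: wcomp_op_def)
  then show ?thesis by (simp add: Hol_def wcomp_op_def)
qed

lemma wcomp_op_Hol0:
  assumes "norm \<beta> = 1" and "m holomorphic_on ball 0 1" and "f \<in> Hol0"
  shows "wcomp_op m \<beta> f \<in> Hol0"
  using assms wcomp_op_Hol[OF assms(1,2)] by (simp add: Hol0_def wcomp_op_def)

definition divide_by_id :: "(complex \<Rightarrow> complex) \<Rightarrow> complex \<Rightarrow> complex" where
  "divide_by_id f z = (if z \<in> ball 0 1 then if z = 0 then deriv f 0 else f z / z else 0)"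

lemma mult_id_Hol0: "g \<in> Hol \<Longrightarrow> (\<lambda>z. z * g z) \<in> Hol0"
  by (auto simp: Hol0_def Hol_def intro!: holomorphic_intros)

lemma divide_by_id_Hol:
  assumes "f \<in> Hol0"
  shows "divide_by_id f \<in> Hol"
proof -
  have f: "f holomorphic_on ball 0 1" and "f 0 = 0"
    using assms by (auto simp: Hol0_def Hol_def)
  have "(\<lambda>z. if z = 0 then deriv f 0 else (f z - f 0) / (z - 0)) holomorphic_on ball 0 1"
    by (rule pole_lemma_open[OF f]) simp
  then have "divide_by_id f holomorphic_on ball 0 1"
    by (rule holomorphic_transform) (simp add: divide_by_id_def \<open>f 0 = 0\<close>)
  then show ?thesis by (simp add: Hol_def divide_by_id_def)
qed

lemma divide_by_id_mult_id:
  assumes "g \<in> Hol"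
  shows "divide_by_id (\<lambda>z. z * g z) = g"
proof -
  have "g field_differentiable at 0"
    using assms holomorphic_on_imp_differentiable_at[of g "ball 0 1" 0] by (simp add: Hol_def)
  then have "((\<lambda>z. z * g z) has_field_derivative g 0) (at 0)"
    by (auto simp: field_differentiable_def intro!: derivative_eq_intros)
  then have "deriv (\<lambda>z. z * g z) 0 = g 0"
    by (rule DERIV_imp_deriv)
  then show ?thesis
    using assms by (auto simp: divide_by_id_def Hol_def)
qed

lemma mult_id_divide_by_id: "f \<in> Hol0 \<Longrightarrow> (\<lambda>z. z * divide_by_id f z) = f"
  by (auto simp: divide_by_id_def Hol0_def Hol_def)

lemma bij_betw_mult_id_Hol_Hol0: "bij_betw (\<lambda>g z. z * g z) Hol Hol0"
  by (rule bij_betw_byWitness[where f' = divide_by_id])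
    (auto simp: divide_by_id_mult_id mult_id_divide_by_id mult_id_Hol0 divide_by_id_Hol)

lemma bij_betw_cmult_Hol:
  assumes "c \<noteq> 0"
  shows "bij_betw (\<lambda>g z. c * g z) Hol Hol"
  by (rule bij_betw_byWitness[where f' = "\<lambda>g z. inverse c * g z"])
    (use assms in \<open>auto intro: Hol_cmult\<close>)

lemma bij_betw_conjugate_iff:
  assumes J: "bij_betw J A B" and S: "bij_betw S A A" and "Q ` A \<subseteq> A"
    and intertwine: "\<And>x. x \<in> A \<Longrightarrow> P (J x) = J (S (Q x))"
  shows "bij_betw P B B \<longleftrightarrow> bij_betw Q A A"
proof -
  have "bij_betw P B B \<longleftrightarrow> bij_betw (P \<circ> J) A B"
    by (rule bij_betw_comp_iff[OF J])
  also have "\<dots> \<longleftrightarrow> bij_betw (J \<circ> (S \<circ> Q)) A B"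
    by (rule bij_betw_cong) (simp add: intertwine)
  also have "\<dots> \<longleftrightarrow> bij_betw (S \<circ> Q) A A"
    using \<open>Q ` A \<subseteq> A\<close> bij_betwE[OF S] by (intro bij_betw_comp_iff2[OF J, symmetric]) auto
  also have "\<dots> \<longleftrightarrow> bij_betw Q A A"
    by (rule bij_betw_comp_iff2[OF S \<open>Q ` A \<subseteq> A\<close>, symmetric])
  finally show ?thesis .
qed

lemma resolvent_set_wcomp_op_Hol0_iff:
  assumes "norm \<beta> = 1" and "m holomorphic_on ball 0 1"
  shows "\<beta> * c \<in> resolvent_set (wcomp_op m \<beta>) Hol0 \<longleftrightarrow> c \<in> resolvent_set (wcomp_op m \<beta>) Hol"
  unfolding resolvent_set_def mem_Collect_eq
proof (rule bij_betw_conjugate_iff[OF bij_betw_mult_id_Hol_Hol0 bij_betw_cmult_Hol])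
  show "\<beta> \<noteq> 0" using assms(1) by auto
  show "(\<lambda>f z. c * f z - wcomp_op m \<beta> f z) ` Hol \<subseteq> Hol"
    using Hol_cmult_diff wcomp_op_Hol[OF assms] by auto
  show "(\<lambda>z. \<beta> * c * (z * g z) - wcomp_op m \<beta> (\<lambda>z. z * g z) z)
      = (\<lambda>z. z * (\<beta> * (c * g z - wcomp_op m \<beta> g z)))" if "g \<in> Hol" for g
    using that by (auto simp: fun_eq_iff wcomp_op_def Hol_def algebra_simps)
qed

lemma image_cmult_eq_vimage_divide:
  fixes b :: "'a :: field"
  assumes "b \<noteq> 0"
  shows "(\<lambda>c. b * c) ` X = (\<lambda>c. c / b) -` X"
proof (intro equalityI subsetI)
  fix x assume "x \<in> (\<lambda>c. c / b) -` X"
  then show "x \<in> (\<lambda>c. b * c) ` X"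
    using assms by (intro image_eqI[of _ _ "x / b"]) auto
qed (use assms in auto)

lemma bij_cmult:
  fixes b :: "'a :: field"
  shows "b \<noteq> 0 \<Longrightarrow> bij (\<lambda>c. b * c)"
  by (rule bij_betw_byWitness[where f' = "\<lambda>c. c / b"]) auto

theorem lemma2p3:
  fixes \<beta> :: complex and m :: "complex \<Rightarrow> complex"
  assumes "norm \<beta> = 1"
    and "m holomorphic_on ball 0 1"
    and "\<exists>z\<in>ball 0 1. m z \<noteq> 0"
  shows "(\<forall>f\<in>Hol0. wcomp_op m \<beta> f \<in> Hol0)
    \<and> spectrum_op (wcomp_op m \<beta>) Hol0 = (\<lambda>c. \<beta> * c) ` spectrum_op (wcomp_op m \<beta>) Hol
    \<and> resolvent_set (wcomp_op m \<beta>) Hol0 = (\<lambda>c. \<beta> * c) ` resolvent_set (wcomp_op m \<beta>) Hol"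
proof -
  have "\<beta> \<noteq> 0" using assms(1) by auto
  have resolvent: "resolvent_set (wcomp_op m \<beta>) Hol0 = (\<lambda>c. \<beta> * c) ` resolvent_set (wcomp_op m \<beta>) Hol"
  proof -
    have "c \<in> resolvent_set (wcomp_op m \<beta>) Hol0 \<longleftrightarrow> c / \<beta> \<in> resolvent_set (wcomp_op m \<beta>) Hol" for c
      using resolvent_set_wcomp_op_Hol0_iff[OF assms(1,2), of "c / \<beta>"] \<open>\<beta> \<noteq> 0\<close> by simp
    then show ?thesis
      by (auto simp: image_cmult_eq_vimage_divide[OF \<open>\<beta> \<noteq> 0\<close>])
  qed
  then have "spectrum_op (wcomp_op m \<beta>) Hol0 = (\<lambda>c. \<beta> * c) ` spectrum_op (wcomp_op m \<beta>) Hol"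
    by (simp add: spectrum_op_def bij_image_Compl_eq[OF bij_cmult[OF \<open>\<beta> \<noteq> 0\<close>]])
  with resolvent show ?thesis
    using wcomp_op_Hol0[OF assms(1,2)] by blast
qed

end
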